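(* Let $M\in\mathbb{N}$ and $r,t\in[0,1]$ with $r^2+t^2=1$ and $rt\neq0$. Then all characteristic exponents $\lambda_k(z)$, $k=1,\dots,2M$, are independent of $z\in\mathbb{T}$.
   Context: $\mathbb{T}$ is the unit circle. For $z\in\mathbb{C}\setminus\{0\}$ let $M_1(z)$ be the $2M\times 2M$ block diagonal matrix with $M$ identical $2\times2$ diagonal blocks $\frac1t\begin{pmatrix} z^{-1}&-r\\-r&z\end{pmatrix}$. Let $M_2(z)=\frac1r N(z)$, where $N(z)$ is the $2M\times 2M$ matrix whose only nonzero entries are $N_{1,1}=-z^{-1}$, $N_{1,2M}=t$, $N_{2M,1}=-t$, $N_{2M,2M}=z$, and, for $k=1,\dots,M-1$, the $2\times2$ block on rows/columns $\{2k,2k+1\}$ equal to $\begin{pmatrix} z&-t\\ t&-z^{-1}\end{pmatrix}$. For $q\in\mathbb{T}^{2M}$ let $D(q)=\mathrm{diag}(q_1,\dots,q_{2M})$. Let $(\omega_n)_{n\in\mathbb{Z}}$, $\omega_n=(\omega_{n,0},\dots,\omega_{n,4M-1})\in\mathbb{T}^{4M}$, be random with all coordinates independent and uniformly distributed on $\mathbb{T}$. Put $\ell_n=(\omega_{n,0},1,\omega_{n,2},1,\dots,\omega_{n,2M-2},1)$, $\rho_n=(1,\omega_{n,1},1,\omega_{n,3},\dots,1,\omega_{n,2M-1})$, $m_n=(\omega_{n,2M},\dots,\omega_{n,4M-1})$, and $A_n(z)=D(\ell_n)M_2(z)D(m_n)M_1(z)D(\rho_n)$. The characteristic exponents are the almost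 surely existing deterministic limits $\lambda_k(z)=\lim_{n\to\infty}\frac1n\log s_k(A_{n-1}(z)\cdots A_0(z))$, $k=1,\dots,2M$, where $s_1\ge\dots\ge s_{2M}$ are singular values (Oseledets). *)

theory Defs
  imports "HOL-Probability.Probability"
          "Jordan_Normal_Form.Char_Poly"
          "HOL-Computational_Algebra.Fundamental_Theorem_Algebra"
begin

text \<open>All matrix indices are 0-based: paper index i corresponds to Isabelle index i-1.\<close>

definition conj_tr :: "complex mat \<Rightarrow> complex mat" where
  "conj_tr A = mat (dim_col A) (dim_row A) (\<lambda>(i,j). cnj (A $$ (j,i)))"

definition sing_vals :: "complex mat \<Rightarrow> real list" where
  "sing_vals A = rev (sorted_list_of_multiset
      (image_mset (\<lambda>x. sqrt (Re x)) (proots (char_poly (conj_tr A * A)))))"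

definition sing_val :: "nat \<Rightarrow> complex mat \<Rightarrow> real" where
  "sing_val k A = sing_vals A ! (k - 1)"

text \<open>M_1(z): block diagonal, M identical blocks (1/t) [[z^-1, -r], [-r, z]].\<close>
definition M1 :: "nat \<Rightarrow> real \<Rightarrow> real \<Rightarrow> complex \<Rightarrow> complex mat" where
  "M1 M r t z = mat (2*M) (2*M) (\<lambda>(i,j).
     if i div 2 = j div 2 then
       (if even i \<and> even j then inverse z
        else if odd i \<and> odd j then z
        else - complex_of_real r) / complex_of_real t
     else 0)"

definition Nmat :: "nat \<Rightarrow> real \<Rightarrow> complex \<Rightarrow> complex mat" where
  "Nmat M t z = mat (2*M) (2*M) (\<lambda>(i,j).
     if i = 0 \<and> j = 0 then - inverse z
     else if i = 0 \<and> j = 2*M - 1 then complex_of_real t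
     else if i = 2*M - 1 \<and> j = 0 then - complex_of_real t
     else if i = 2*M - 1 \<and> j = 2*M - 1 then z
     else if 1 \<le> i \<and> i < 2*M - 1 \<and> 1 \<le> j \<and> j < 2*M - 1 \<and> (i + 1) div 2 = (j + 1) div 2 then
       (if odd i \<and> odd j then z
        else if odd i \<and> even j then - complex_of_real t
        else if even i \<and> odd j then complex_of_real t
        else - inverse z)
     else 0)"

definition M2 :: "nat \<Rightarrow> real \<Rightarrow> real \<Rightarrow> complex \<Rightarrow> complex mat" where
  "M2 M r t z = (1 / complex_of_real r) \<cdot>\<^sub>m Nmat M t z"

definition Dg :: "nat \<Rightarrow> (nat \<Rightarrow> complex) \<Rightarrow> complex mat" where
  "Dg d q = mat d d (\<lambda>(i,j). if i = j then q i else 0)"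

text \<open>Random phases: \<omega> (n, j) is \<omega>_{n,j}; only j < 4M is used.
  \<ell>_n, \<rho>_n, m_n as in the paper (0-based positions).\<close>
definition ell :: "(nat \<times> nat \<Rightarrow> complex) \<Rightarrow> nat \<Rightarrow> nat \<Rightarrow> complex" where
  "ell \<omega> n i = (if even i then \<omega> (n, i) else 1)"

definition rho :: "(nat \<times> nat \<Rightarrow> complex) \<Rightarrow> nat \<Rightarrow> nat \<Rightarrow> complex" where
  "rho \<omega> n i = (if odd i then \<omega> (n, i) else 1)"

definition mm :: "nat \<Rightarrow> (nat \<times> nat \<Rightarrow> complex) \<Rightarrow> nat \<Rightarrow> nat \<Rightarrow> complex" where
  "mm M \<omega> n i = \<omega> (n, 2*M + i)"

definition Amat :: "nat \<Rightarrow> real \<Rightarrow> real \<Rightarrow> (nat \<times> nat \<Rightarrow> complex) \<Rightarrow> nat \<Rightarrow> complex \<Rightarrow> complex mat" where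
  "Amat M r t \<omega> n z =
     Dg (2*M) (ell \<omega> n) * M2 M r t z * Dg (2*M) (mm M \<omega> n) * M1 M r t z * Dg (2*M) (rho \<omega> n)"

fun Aprod :: "nat \<Rightarrow> real \<Rightarrow> real \<Rightarrow> (nat \<times> nat \<Rightarrow> complex) \<Rightarrow> complex \<Rightarrow> nat \<Rightarrow> complex mat" where
  "Aprod M r t \<omega> z 0 = 1\<^sub>m (2*M)"
| "Aprod M r t \<omega> z (Suc n) = Amat M r t \<omega> n z * Aprod M r t \<omega> z n"

text \<open>Uniform distribution on the unit circle, and the i.i.d. family of phases
  (only n \<ge> 0 matters, since only A_0, A_1, ... enter the products).\<close>
definition unifT :: "complex measure" where
  "unifT = distr (uniform_measure lborel {0..2*pi}) borel (\<lambda>\<theta>. cis \<theta>)"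

definition Omega :: "(nat \<times> nat \<Rightarrow> complex) measure" where
  "Omega = PiM UNIV (\<lambda>_. unifT)"

definition char_exp :: "nat \<Rightarrow> real \<Rightarrow> real \<Rightarrow> nat \<Rightarrow> complex \<Rightarrow> real" where
  "char_exp M r t k z = (THE c. AE \<omega> in Omega.
      (\<lambda>n. ln (sing_val k (Aprod M r t \<omega> z n)) / real n) \<longlonglongrightarrow> c)"

end

theory Submission
  imports Defs
begin

text \<open>With L_z = diag(z\<inverse>, 1, z\<inverse>, 1, ...) and R_z = diag(1, z, 1, z, ...) one has
  M_i(z) = L_z M_i(1) R_z for i = 1, 2. In A_n(z) the gauge factors merge with the random
  diagonal matrices: D(\<ell>_n) L_z, R_z D(m_n) L_z and R_z D(\<rho>_n) are again diagonal matrices of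
  the same shape, with every phase \<omega>_{n,j} multiplied by z\<inverse> (j even) or z (j odd). Hence
  A_{n-1}(z)\<cdots>A_0(z) is the product at z = 1 evaluated at rotated phases. The uniform
  distribution on the circle is rotation invariant, so this rotation preserves the law of the
  whole family of phases, and the almost sure limits defining \<lambda>_k(z) and \<lambda>_k(1) coincide.\<close>

lemma emeasure_lborel_vimage_plus:
  fixes S :: "real set"
  assumes "S \<in> sets borel"
  shows "emeasure lborel ((+) a -` S) = emeasure lborel S"
proof -
  have "emeasure lborel S = emeasure (distr lborel borel ((+) a)) S"
    by (simp add: lborel_distr_plus)
  also have "\<dots> = emeasure lborel ((+) a -` S)"
    using assms by (subst emeasure_distr) auto
  finally show ?thesis by simp
qed

lemma emeasure_lborel_Int_Icc_split:
  fixes B :: "real set"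
  assumes "B \<in> sets borel" "a \<le> b" "b \<le> c"
  shows "emeasure lborel (B \<inter> {a..c}) = emeasure lborel (B \<inter> {a..b}) + emeasure lborel (B \<inter> {b..c})"
proof -
  have "B \<inter> {a..b} \<in> sets lborel" "B \<inter> {b..c} \<in> sets lborel"
    using assms by simp_all
  moreover have "(B \<inter> {a..b}) \<inter> (B \<inter> {b..c}) \<in> null_sets lborel"
    by (rule null_sets_subset[of "{b}"]) (use calculation in auto)
  moreover have "B \<inter> {a..c} = (B \<inter> {a..b}) \<union> (B \<inter> {b..c})"
    using assms by auto
  ultimately show ?thesis
    by (simp add: emeasure_Un')
qed

lemma emeasure_lborel_periodic_shift:
  fixes B :: "real set"
  assumes B: "B \<in> sets borel" and periodic: "\<And>x. x \<in> B \<longleftrightarrow> x + p \<in> B"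
    and a: "0 \<le> a" "a \<le> p"
  shows "emeasure lborel ((+) a -` B \<inter> {0..p}) = emeasure lborel (B \<inter> {0..p})"
proof -
  have wrap: "B \<inter> {p..a + p} = (+) (- p) -` (B \<inter> {0..a})"
  proof (rule Set.set_eqI)
    fix x
    have "x \<in> B \<longleftrightarrow> - p + x \<in> B"
      using periodic[of "- p + x"] by simp
    then show "x \<in> B \<inter> {p..a + p} \<longleftrightarrow> x \<in> (+) (- p) -` (B \<inter> {0..a})"
      by auto
  qed
  have "emeasure lborel ((+) a -` B \<inter> {0..p}) = emeasure lborel ((+) a -` (B \<inter> {a..a + p}))"
    by (rule arg_cong[where f = "emeasure lborel"]) auto
  also have "\<dots> = emeasure lborel (B \<inter> {a..a + p})"
    using B by (intro emeasure_lborel_vimage_plus) auto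
  also have "\<dots> = emeasure lborel (B \<inter> {a..p}) + emeasure lborel (B \<inter> {p..a + p})"
    using a B by (intro emeasure_lborel_Int_Icc_split) auto
  also have "emeasure lborel (B \<inter> {p..a + p}) = emeasure lborel (B \<inter> {0..a})"
    unfolding wrap using B by (intro emeasure_lborel_vimage_plus) auto
  also have "emeasure lborel (B \<inter> {a..p}) + \<dots> = emeasure lborel (B \<inter> {0..p})"
    using a B by (simp add: emeasure_lborel_Int_Icc_split[of B 0 a p] add.commute)
  finally show ?thesis .
qed

lemma sets_unifT [simp, measurable_cong]: "sets unifT = sets borel"
  by (simp add: unifT_def)

lemma space_unifT [simp]: "space unifT = UNIV"
  by (simp add: unifT_def)

lemma borel_measurable_cis [measurable]: "cis \<in> borel_measurable borel"
  by (intro borel_measurable_continuous_onI continuous_intros)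

lemma prob_space_unifT: "prob_space unifT"
  unfolding unifT_def
  by (intro prob_space.prob_space_distr prob_space_uniform_measure) auto

lemma emeasure_unifT:
  assumes "F \<in> sets borel"
  shows "emeasure unifT F = emeasure lborel (cis -` F \<inter> {0..2*pi}) / emeasure lborel {0..2*pi::real}"
proof -
  have "cis -` F \<in> sets lborel"
    using measurable_sets[OF borel_measurable_cis assms] by simp
  then show ?thesis
    using assms unfolding unifT_def
    by (simp add: emeasure_distr Int_commute)
qed

lemma cis_surj_Icc_0_2pi:
  assumes "norm c = 1"
  obtains a where "0 \<le> a" "a \<le> 2*pi" "c = cis a"
proof -
  have "c \<noteq> 0"
    using assms by auto
  then have c: "cis (Arg c) = c"
    using assms cis_Arg[of c] by (auto simp: sgn_div_norm)
  have "cis (Arg c + 2*pi) = cis (Arg c)"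
    by (simp add: complex_eq_iff)
  then show ?thesis
    using that[of "Arg c"] that[of "Arg c + 2*pi"] Arg_bounded[of c] c
    by (cases "Arg c \<ge> 0") auto
qed

lemma distr_unifT_rotation:
  assumes c: "norm c = 1"
  shows "distr unifT unifT ((*) c) = unifT"
proof (rule measure_eqI)
  fix F assume "F \<in> sets (distr unifT unifT ((*) c))"
  then have F: "F \<in> sets borel" by simp
  obtain a where a: "0 \<le> a" "a \<le> 2*pi" "c = cis a"
    using cis_surj_Icc_0_2pi[OF c] .
  define B where "B = cis -` F"
  have B: "B \<in> sets borel"
    unfolding B_def using measurable_sets[OF borel_measurable_cis F] by simp
  have periodic: "x \<in> B \<longleftrightarrow> x + 2*pi \<in> B" for x
  proof -
    have "cis (x + 2*pi) = cis x"
      by (simp add: complex_eq_iff)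
    then show ?thesis
      by (simp add: B_def)
  qed
  have "cis -` ((*) c -` F) = (+) a -` B"
    unfolding B_def a(3) by (auto simp: cis_mult)
  moreover have "(*) c -` F \<in> sets borel"
    by (intro measurable_sets_borel[OF _ F] borel_measurable_continuous_onI continuous_intros)
  ultimately show "emeasure (distr unifT unifT ((*) c)) F = emeasure unifT F"
    using F emeasure_lborel_periodic_shift[OF B periodic a(1,2)]
    by (simp add: emeasure_distr emeasure_unifT B_def)
qed simp

lemma distr_PiM_componentwise_measure_preserving:
  assumes N: "prob_space N"
    and f: "\<And>i. i \<in> I \<Longrightarrow> f i \<in> measurable N N" "\<And>i. i \<in> I \<Longrightarrow> distr N N (f i) = N"
  shows "distr (PiM I (\<lambda>_. N)) (PiM I (\<lambda>_. N)) (\<lambda>\<omega>. \<lambda>i\<in>I. f i (\<omega> i)) = PiM I (\<lambda>_. N)"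
proof -
  interpret P: product_prob_space "\<lambda>_. N" I
    using N by (intro product_prob_spaceI)
  have meas: "(\<lambda>\<omega>. \<lambda>i\<in>I. f i (\<omega> i)) \<in> measurable (PiM I (\<lambda>_. N)) (PiM I (\<lambda>_. N))"
    using f(1) by (intro measurable_PiM_single') (auto simp: space_PiM PiE_iff intro: measurable_space)
  show ?thesis
  proof (rule P.PiM_eq)
    fix J F
    assume J: "finite J" "J \<subseteq> I" and F: "\<And>j. j \<in> J \<Longrightarrow> F j \<in> sets N"
    have "(\<lambda>\<omega>. \<lambda>i\<in>I. f i (\<omega> i)) -` prod_emb I (\<lambda>_. N) J (Pi\<^sub>E J F) \<inter> space (PiM I (\<lambda>_. N))
        = prod_emb I (\<lambda>_. N) J (\<Pi>\<^sub>E j\<in>J. f j -` F j \<inter> space N)"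
      using J f(1) by (auto simp: prod_emb_def space_PiM PiE_iff subset_eq measurable_space[OF f(1)])
    then have "emeasure (distr (PiM I (\<lambda>_. N)) (PiM I (\<lambda>_. N)) (\<lambda>\<omega>. \<lambda>i\<in>I. f i (\<omega> i)))
          (prod_emb I (\<lambda>_. N) J (Pi\<^sub>E J F))
        = (\<Prod>j\<in>J. emeasure N (f j -` F j \<inter> space N))"
      using J F f(1) meas
      by (simp add: emeasure_distr sets_PiM_I_finite P.emeasure_PiM_emb measurable_sets subsetD)
    also have "\<dots> = (\<Prod>j\<in>J. emeasure N (F j))"
      using J F f by (intro prod.cong refl) (metis emeasure_distr subsetD)
    finally show "emeasure (distr (PiM I (\<lambda>_. N)) (PiM I (\<lambda>_. N)) (\<lambda>\<omega>. \<lambda>i\<in>I. f i (\<omega> i)))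
        (prod_emb I (\<lambda>_. N) J (Pi\<^sub>E J F)) = (\<Prod>j\<in>J. emeasure N (F j))" .
  qed simp
qed

lemma AE_measure_preserving_iff:
  assumes T: "T \<in> measurable M M" "distr M M T = M"
    and S: "S \<in> measurable M M" "distr M M S = M"
    and T_S: "\<And>x. x \<in> space M \<Longrightarrow> T (S x) = x"
  shows "(AE x in M. P (T x)) \<longleftrightarrow> (AE x in M. P x)"
proof
  assume "AE x in M. P (T x)"
  then have "AE x in distr M M S. P (T x)"
    unfolding S(2) .
  then have "AE x in M. P (T (S x))"
    by (rule AE_distrD[OF S(1)])
  then show "AE x in M. P x"
    using AE_space by eventually_elim (simp add: T_S)
next
  assume "AE x in M. P x"
  then have "AE x in distr M M T. P x"
    unfolding T(2) .
  then show "AE x in M. P (T x)"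
    by (rule AE_distrD[OF T(1)])
qed

lemma Dg_eq_mat_diag: "Dg d q = mat_diag d q"
  by (auto simp: Dg_def mat_diag_def)

lemma mat_diag_mult_mat_diag_mult:
  assumes "A \<in> carrier_mat n m"
  shows "mat_diag n f * (mat_diag n g * A) = mat_diag n (\<lambda>i. f i * g i) * A"
  using assms by (simp flip: assoc_mult_mat[of _ n n _ n _ m])

lemma mat_diag_sandwich:
  assumes "A \<in> carrier_mat n n"
  shows "mat_diag n f * A * mat_diag n g = mat n n (\<lambda>(i, j). f i * A $$ (i, j) * g j)"
  using assms by (auto simp: mat_diag_mult_left mat_diag_mult_right[of _ n])

lemma mat_diag_conjugated_product:
  assumes A: "A \<in> carrier_mat n n" and B: "B \<in> carrier_mat n n"
  shows "mat_diag n a * (mat_diag n p * A * mat_diag n q) * mat_diag n b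
           * (mat_diag n p * B * mat_diag n q) * mat_diag n c
         = mat_diag n (\<lambda>i. a i * p i) * A * mat_diag n (\<lambda>i. q i * b i * p i)
           * B * mat_diag n (\<lambda>i. q i * c i)"
  using assms
  by (simp add: assoc_mult_mat[of _ n n _ n _ n] mult_carrier_mat[of _ n n _ n]
      mat_diag_mult_mat_diag_mult[of _ n n] mult.assoc)

lemma M1_carrier: "M1 M r t z \<in> carrier_mat (2*M) (2*M)"
  by (simp add: M1_def)

lemma Nmat_carrier: "Nmat M t z \<in> carrier_mat (2*M) (2*M)"
  by (simp add: Nmat_def)

lemma M2_carrier: "M2 M r t z \<in> carrier_mat (2*M) (2*M)"
  by (simp add: M2_def Nmat_carrier)

definition gauge_even :: "complex \<Rightarrow> nat \<Rightarrow> complex" where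
  "gauge_even z i = (if even i then inverse z else 1)"

definition gauge_odd :: "complex \<Rightarrow> nat \<Rightarrow> complex" where
  "gauge_odd z i = (if odd i then z else 1)"

lemma M1_gauge:
  assumes "z \<noteq> 0"
  shows "M1 M r t z = mat_diag (2*M) (gauge_even z) * M1 M r t 1 * mat_diag (2*M) (gauge_odd z)"
  using assms by (auto simp: mat_diag_sandwich M1_def gauge_even_def gauge_odd_def)

lemma Nmat_gauge:
  assumes "z \<noteq> 0"
  shows "Nmat M t z = mat_diag (2*M) (gauge_even z) * Nmat M t 1 * mat_diag (2*M) (gauge_odd z)"
  using assms by (auto simp: mat_diag_sandwich Nmat_def gauge_even_def gauge_odd_def)

lemma M2_gauge:
  assumes "z \<noteq> 0"
  shows "M2 M r t z = mat_diag (2*M) (gauge_even z) * M2 M r t 1 * mat_diag (2*M) (gauge_odd z)"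
  unfolding M2_def Nmat_gauge[OF assms] using Nmat_carrier[of M t 1]
  by (auto simp: mat_diag_sandwich)

definition rotate_phases :: "complex \<Rightarrow> (nat \<times> nat \<Rightarrow> complex) \<Rightarrow> nat \<times> nat \<Rightarrow> complex" where
  "rotate_phases z \<omega> i = gauge_even z (snd i) * gauge_odd z (snd i) * \<omega> i"

lemma Amat_gauge:
  assumes z: "z \<noteq> 0"
  shows "Amat M r t \<omega> n z = Amat M r t (rotate_phases z \<omega>) n 1"
proof -
  have "(\<lambda>i. ell \<omega> n i * gauge_even z i) = ell (rotate_phases z \<omega>) n"
    "(\<lambda>i. gauge_odd z i * mm M \<omega> n i * gauge_even z i) = mm M (rotate_phases z \<omega>) n"
    "(\<lambda>i. gauge_odd z i * rho \<omega> n i) = rho (rotate_phases z \<omega>) n"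
    by (auto simp: ell_def mm_def rho_def rotate_phases_def gauge_even_def gauge_odd_def)
  then show ?thesis
    unfolding Amat_def Dg_eq_mat_diag M1_gauge[OF z] M2_gauge[OF z]
    by (simp add: mat_diag_conjugated_product M1_carrier M2_carrier)
qed

lemma Aprod_gauge:
  assumes "z \<noteq> 0"
  shows "Aprod M r t \<omega> z n = Aprod M r t (rotate_phases z \<omega>) 1 n"
  by (induction n) (simp_all add: Amat_gauge[OF assms])

lemma measurable_rotate_phases: "rotate_phases z \<in> measurable Omega Omega"
  unfolding Omega_def rotate_phases_def
  by (intro measurable_PiM_single') (auto simp: measurable_cong_sets[OF refl sets_unifT])

lemma distr_rotate_phases:
  assumes z: "norm z = 1"
  shows "distr Omega Omega (rotate_phases z) = Omega"
proof -
  define c where "c i = gauge_even z (snd i) * gauge_odd z (snd i)" for i :: "nat \<times> nat"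
  have "norm (c i) = 1" for i
    using z by (simp add: c_def gauge_even_def gauge_odd_def norm_inverse)
  moreover have "(*) w \<in> measurable unifT unifT" for w :: complex
    by measurable
  moreover have "rotate_phases z = (\<lambda>\<omega>. \<lambda>i\<in>UNIV. c i * \<omega> i)"
    by (auto simp: rotate_phases_def c_def fun_eq_iff)
  ultimately show ?thesis
    unfolding Omega_def
    using distr_PiM_componentwise_measure_preserving[OF prob_space_unifT, where f = "\<lambda>i. (*) (c i)"]
    by (simp add: distr_unifT_rotation)
qed

lemma rotate_phases_inverse:
  assumes "z \<noteq> 0"
  shows "rotate_phases z (rotate_phases (inverse z) \<omega>) = \<omega>"
  using assms by (auto simp: rotate_phases_def gauge_even_def gauge_odd_def)

lemma char_exp_eq_char_exp_1:
  assumes z: "norm z = 1"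
  shows "char_exp M r t k z = char_exp M r t k 1"
proof -
  have "z \<noteq> 0" "norm (inverse z) = 1"
    using z by (auto simp: norm_inverse)
  define converges_to where
    "converges_to \<omega> c \<longleftrightarrow> (\<lambda>n. ln (sing_val k (Aprod M r t \<omega> 1 n)) / real n) \<longlonglongrightarrow> c" for \<omega> c
  have "(AE \<omega> in Omega. converges_to (rotate_phases z \<omega>) c) \<longleftrightarrow> (AE \<omega> in Omega. converges_to \<omega> c)" for c
    using z \<open>z \<noteq> 0\<close> \<open>norm (inverse z) = 1\<close>
    by (intro AE_measure_preserving_iff[where S = "rotate_phases (inverse z)"]
        measurable_rotate_phases distr_rotate_phases rotate_phases_inverse)
  then show ?thesis
    unfolding char_exp_def Aprod_gauge[OF \<open>z \<noteq> 0\<close>] converges_to_def[symmetric] by simp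
qed

theorem mainTheorem13:
  fixes M :: nat and r t :: real
  assumes "0 \<le> r" "r \<le> 1" "0 \<le> t" "t \<le> 1"
    and "r\<^sup>2 + t\<^sup>2 = 1" and "r * t \<noteq> 0"
  shows "\<forall>k\<in>{1..2*M}. \<forall>z\<in>sphere 0 1. \<forall>z'\<in>sphere 0 1.
           char_exp M r t k z = char_exp M r t k z'"
  \<comment> \<open>The gauge argument needs none of the hypotheses on r and t.\<close>
  using char_exp_eq_char_exp_1 by (metis mem_sphere_0)

end
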